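(* Let $C$ be a coalgebra over a field $k$ with a coradical basis $\mathcal B$, and let $M$ be a finite dimensional local right coideal of $C$ which is $\mathcal B$-supported. Then the set $(\mathcal B\cap M)\setminus \mathrm{Jac}(M)$ is nonempty, and $M$ is generated as a right $C$-comodule by any element of this set.
   Context: The coradical $C_0$ of $C$ is the sum of all simple subcoalgebras of $C$. For subspaces $U,V\subseteq C$, $U\wedge V=\Delta^{-1}(U\otimes C+C\otimes V)$. The coradical filtration is $C_0\subseteq C_1\subseteq\cdots$ with $C_n=C_0\wedge C_{n-1}$ for $n\geq1$. A coradical basis of $C$ is a $k$-basis $\mathcal B$ of $C$ such that $\mathcal B\cap C_n$ is a basis of $C_n$ for all $n$. A right coideal $M$ (a right subcomodule of $C$) is $\mathcal B$-supported if $\mathcal B\cap M$ is a $k$-basis of $M$. A nonzero comodule is local if it has a unique maximal subcomodule. $\mathrm{Jac}(M)$ denotes the Jacobson radical of $M$ (the intersection of its maximal subcomodules). *)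

theory Defs
  imports Main
begin

text \<open>Coalgebras over a field 'k are represented in coordinates: the underlying
vector space C is the space of finitely supported functions 'i => 'k (the free
vector space on the index type 'i; every vector space is of this form), and
C (x) C is the space of finitely supported functions 'i x 'i => 'k.
The comultiplication is given by its values delta a on the standard basis
vectors e_a, and the counit by its values eps a on e_a.\<close>

definition fsupp :: "('x \<Rightarrow> 'k::zero) \<Rightarrow> 'x set" where
  "fsupp f = {i. f i \<noteq> 0}"

definition vecs :: "('i \<Rightarrow> 'k::zero) set" where
  "vecs = {f. finite (fsupp f)}"

definition zvec :: "'x \<Rightarrow> 'k::zero" where
  "zvec = (\<lambda>_. 0)"

definition lspan :: "('x \<Rightarrow> 'k::field) set \<Rightarrow> ('x \<Rightarrow> 'k) set" where
  "lspan S = {g. \<exists>F c. finite F \<and> F \<subseteq> S \<and> g = (\<lambda>x. \<Sum>s\<in>F. c s * s x)}"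

definition lin_indep :: "('x \<Rightarrow> 'k::field) set \<Rightarrow> bool" where
  "lin_indep S = (\<forall>F c. finite F \<and> F \<subseteq> S \<and> (\<lambda>x. \<Sum>s\<in>F. c s * s x) = zvec
                      \<longrightarrow> (\<forall>s\<in>F. c s = 0))"

definition is_basis_of :: "('x \<Rightarrow> 'k::field) set \<Rightarrow> ('x \<Rightarrow> 'k) set \<Rightarrow> bool" where
  "is_basis_of S W = (S \<subseteq> W \<and> lin_indep S \<and> lspan S = W)"

definition is_subspace :: "('i \<Rightarrow> 'k::field) set \<Rightarrow> bool" where
  "is_subspace S = (S \<subseteq> vecs \<and> zvec \<in> S \<and>
     (\<forall>x\<in>S. \<forall>y\<in>S. (\<lambda>i. x i + y i) \<in> S) \<and> (\<forall>r. \<forall>x\<in>S. (\<lambda>i. r * x i) \<in> S))"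

definition tens :: "('i \<Rightarrow> 'k::field) \<Rightarrow> ('i \<Rightarrow> 'k) \<Rightarrow> ('i \<times> 'i \<Rightarrow> 'k)" where
  "tens u v = (\<lambda>(i, j). u i * v j)"

definition comult :: "('i \<Rightarrow> ('i \<times> 'i \<Rightarrow> 'k::field)) \<Rightarrow> ('i \<Rightarrow> 'k) \<Rightarrow> ('i \<times> 'i \<Rightarrow> 'k)" where
  "comult \<delta> f = (\<lambda>ij. \<Sum>a\<in>fsupp f. f a * \<delta> a ij)"

definition is_coalgebra :: "('i \<Rightarrow> ('i \<times> 'i \<Rightarrow> 'k::field)) \<Rightarrow> ('i \<Rightarrow> 'k) \<Rightarrow> bool" where
  "is_coalgebra \<delta> \<epsilon> =
    ((\<forall>a. finite (fsupp (\<delta> a))) \<and>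
     (\<forall>a i j l. (\<Sum>p\<in>{p. \<delta> a (p, l) \<noteq> 0}. \<delta> a (p, l) * \<delta> p (i, j))
              = (\<Sum>q\<in>{q. \<delta> a (i, q) \<noteq> 0}. \<delta> a (i, q) * \<delta> q (j, l))) \<and>
     (\<forall>a j. (\<Sum>p\<in>{p. \<delta> a (p, j) \<noteq> 0}. \<epsilon> p * \<delta> a (p, j)) = (if a = j then 1 else 0)) \<and>
     (\<forall>a i. (\<Sum>q\<in>{q. \<delta> a (i, q) \<noteq> 0}. \<delta> a (i, q) * \<epsilon> q) = (if a = i then 1 else 0)))"

definition wedge :: "('i \<Rightarrow> ('i \<times> 'i \<Rightarrow> 'k::field)) \<Rightarrow> ('i \<Rightarrow> 'k) set \<Rightarrow> ('i \<Rightarrow> 'k) set \<Rightarrow> ('i \<Rightarrow> 'k) set" where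
  "wedge \<delta> U W = {c \<in> vecs. comult \<delta> c \<in>
      lspan ({tens u x | u x. u \<in> U \<and> x \<in> vecs} \<union> {tens x w | x w. x \<in> vecs \<and> w \<in> W})}"

definition subcoalgebra :: "('i \<Rightarrow> ('i \<times> 'i \<Rightarrow> 'k::field)) \<Rightarrow> ('i \<Rightarrow> 'k) set \<Rightarrow> bool" where
  "subcoalgebra \<delta> D = (is_subspace D \<and>
      (\<forall>d\<in>D. comult \<delta> d \<in> lspan {tens u v | u v. u \<in> D \<and> v \<in> D}))"

definition simple_subcoalgebra :: "('i \<Rightarrow> ('i \<times> 'i \<Rightarrow> 'k::field)) \<Rightarrow> ('i \<Rightarrow> 'k) set \<Rightarrow> bool" where
  "simple_subcoalgebra \<delta> D = (subcoalgebra \<delta> D \<and> D \<noteq> {zvec} \<and>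
      (\<forall>E. subcoalgebra \<delta> E \<and> E \<subseteq> D \<longrightarrow> E = {zvec} \<or> E = D))"

definition coradical :: "('i \<Rightarrow> ('i \<times> 'i \<Rightarrow> 'k::field)) \<Rightarrow> ('i \<Rightarrow> 'k) set" where
  "coradical \<delta> = lspan (\<Union>{D. simple_subcoalgebra \<delta> D})"

fun corad_filt :: "('i \<Rightarrow> ('i \<times> 'i \<Rightarrow> 'k::field)) \<Rightarrow> nat \<Rightarrow> ('i \<Rightarrow> 'k) set" where
  "corad_filt \<delta> 0 = coradical \<delta>"
| "corad_filt \<delta> (Suc n) = wedge \<delta> (coradical \<delta>) (corad_filt \<delta> n)"

definition coradical_basis :: "('i \<Rightarrow> ('i \<times> 'i \<Rightarrow> 'k::field)) \<Rightarrow> ('i \<Rightarrow> 'k) set \<Rightarrow> bool" where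
  "coradical_basis \<delta> B = (is_basis_of B vecs \<and>
      (\<forall>n. is_basis_of (B \<inter> corad_filt \<delta> n) (corad_filt \<delta> n)))"

text \<open>Right coideals = right subcomodules of C: Delta(M) in M (x) C.\<close>
definition right_coideal :: "('i \<Rightarrow> ('i \<times> 'i \<Rightarrow> 'k::field)) \<Rightarrow> ('i \<Rightarrow> 'k) set \<Rightarrow> bool" where
  "right_coideal \<delta> M = (is_subspace M \<and>
      (\<forall>m\<in>M. comult \<delta> m \<in> lspan {tens u v | u v. u \<in> M \<and> v \<in> vecs}))"

definition maximal_subcomodule :: "('i \<Rightarrow> ('i \<times> 'i \<Rightarrow> 'k::field)) \<Rightarrow> ('i \<Rightarrow> 'k) set \<Rightarrow> ('i \<Rightarrow> 'k) set \<Rightarrow> bool" where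
  "maximal_subcomodule \<delta> M N = (right_coideal \<delta> N \<and> N \<subset> M \<and>
      (\<forall>N'. right_coideal \<delta> N' \<and> N \<subseteq> N' \<and> N' \<subseteq> M \<longrightarrow> N' = N \<or> N' = M))"

definition local_comodule :: "('i \<Rightarrow> ('i \<times> 'i \<Rightarrow> 'k::field)) \<Rightarrow> ('i \<Rightarrow> 'k) set \<Rightarrow> bool" where
  "local_comodule \<delta> M = (M \<noteq> {zvec} \<and> (\<exists>!N. maximal_subcomodule \<delta> M N))"

definition jac :: "('i \<Rightarrow> ('i \<times> 'i \<Rightarrow> 'k::field)) \<Rightarrow> ('i \<Rightarrow> 'k) set \<Rightarrow> ('i \<Rightarrow> 'k) set" where
  "jac \<delta> M = M \<inter> \<Inter>{N. maximal_subcomodule \<delta> M N}"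

definition fin_dim :: "('i \<Rightarrow> 'k::field) set \<Rightarrow> bool" where
  "fin_dim M = (\<exists>S. finite S \<and> lspan S = M)"

definition B_supported :: "('i \<Rightarrow> 'k::field) set \<Rightarrow> ('i \<Rightarrow> 'k) set \<Rightarrow> bool" where
  "B_supported B M = is_basis_of (B \<inter> M) M"

definition generated_subcomodule :: "('i \<Rightarrow> ('i \<times> 'i \<Rightarrow> 'k::field)) \<Rightarrow> ('i \<Rightarrow> 'k) \<Rightarrow> ('i \<Rightarrow> 'k) set" where
  "generated_subcomodule \<delta> m = \<Inter>{N. right_coideal \<delta> N \<and> m \<in> N}"

end

theory Submission
  imports Defs "HOL-Library.Function_Algebras" HOL.Vector_Spaces
begin

text \<open>A local comodule has its Jacobson radical as unique maximal subcomodule. Since M is finite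
dimensional, every proper subcomodule lies in some maximal one, hence in the radical. So an element
of M outside the radical generates M, and such elements exist among the basis vectors B \<inter> M,
because they span M while the radical is a proper subspace.\<close>

interpretation fv: vector_space "\<lambda>(r::'k::field) (f::'x \<Rightarrow> 'k). (\<lambda>x. r * f x)"
  by unfold_locales (simp_all add: fun_eq_iff algebra_simps)

lemma sum_fun_apply: "(\<Sum>a\<in>A. f a) x = (\<Sum>a\<in>A. f a x)"
  by (induction A rule: infinite_finite_induct) auto

lemma lspan_eq_span: "lspan S = fv.span S"
  unfolding lspan_def fv.span_explicit by (auto simp: fun_eq_iff sum_fun_apply)

lemma is_subspace_imp_subspace: "is_subspace N \<Longrightarrow> fv.subspace N"
  unfolding is_subspace_def fv.subspace_def
  by (auto simp: zvec_def zero_fun_def plus_fun_def)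

lemma lspan_subset_subspace: "is_subspace N \<Longrightarrow> S \<subseteq> N \<Longrightarrow> lspan S \<subseteq> N"
  by (simp add: lspan_eq_span fv.span_minimal is_subspace_imp_subspace)

lemma column_in_subspace_if_mem_tensor_span:
  assumes N: "is_subspace N" and f: "f \<in> lspan {tens u v | u v. u \<in> N \<and> v \<in> vecs}"
  shows "(\<lambda>i. f (i, j)) \<in> N"
proof -
  have sN: "fv.subspace N" using N by (rule is_subspace_imp_subspace)
  let ?columns_in_N = "{g. (\<lambda>i. g (i, j)) \<in> N}"
  have "fv.subspace ?columns_in_N"
    using sN unfolding fv.subspace_def by (auto simp: zero_fun_def plus_fun_def)
  moreover have "{tens u v | u v. u \<in> N \<and> v \<in> vecs} \<subseteq> ?columns_in_N"
  proof clarify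
    fix u v :: "'a \<Rightarrow> 'b" assume "u \<in> N"
    moreover have "(\<lambda>i. tens u v (i, j)) = (\<lambda>i. v j * u i)" by (simp add: tens_def mult.commute)
    ultimately show "(\<lambda>i. tens u v (i, j)) \<in> N" using sN unfolding fv.subspace_def by auto
  qed
  ultimately show ?thesis using f by (auto simp: lspan_eq_span dest: fv.span_minimal)
qed

lemma mem_tensor_span_if_columns_in:
  assumes fin: "finite (fsupp f)" and cols: "\<And>j. (\<lambda>i. f (i, j)) \<in> N"
  shows "f \<in> lspan {tens u v | u v. u \<in> N \<and> v \<in> vecs}"
proof -
  define J where "J = snd ` fsupp f"
  define e where "e j = (\<lambda>k. if k = j then (1::'b) else 0)" for j :: 'a
  have "e j \<in> vecs" for j
    using finite_subset[of "fsupp (e j)" "{j}"] by (auto simp: vecs_def fsupp_def e_def)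
  then have "(\<Sum>j\<in>J. tens (\<lambda>i. f (i, j)) (e j)) \<in> fv.span {tens u v | u v. u \<in> N \<and> v \<in> vecs}"
    using cols by (blast intro: fv.span_sum fv.span_base)
  moreover have "(\<Sum>j\<in>J. tens (\<lambda>i. f (i, j)) (e j)) = f"
  proof
    fix x :: "'a \<times> 'a"
    obtain i j' where x: "x = (i, j')" by (cases x)
    have "finite J" using fin by (simp add: J_def)
    then have "(\<Sum>j\<in>J. tens (\<lambda>i. f (i, j)) (e j)) x = (if j' \<in> J then f (i, j') else 0)"
      by (simp add: sum_fun_apply tens_def e_def x if_distrib cong: if_cong)
    also have "\<dots> = f x"
      using x by (auto simp: J_def fsupp_def image_iff)
    finally show "(\<Sum>j\<in>J. tens (\<lambda>i. f (i, j)) (e j)) x = f x" .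
  qed
  ultimately show ?thesis by (simp add: lspan_eq_span)
qed

lemma finite_fsupp_comult:
  assumes "is_coalgebra \<delta> \<epsilon>" "m \<in> vecs"
  shows "finite (fsupp (comult \<delta> m))"
proof (rule finite_subset)
  show "fsupp (comult \<delta> m) \<subseteq> (\<Union>a\<in>fsupp m. fsupp (\<delta> a))"
  proof
    fix x assume "x \<in> fsupp (comult \<delta> m)"
    then have "(\<Sum>a\<in>fsupp m. m a * \<delta> a x) \<noteq> 0" by (simp add: fsupp_def comult_def)
    then obtain a where "a \<in> fsupp m" "m a * \<delta> a x \<noteq> 0"
      by (meson sum.not_neutral_contains_not_neutral)
    then show "x \<in> (\<Union>a\<in>fsupp m. fsupp (\<delta> a))" by (auto simp: fsupp_def)
  qed
  show "finite (\<Union>a\<in>fsupp m. fsupp (\<delta> a))"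
    using assms unfolding is_coalgebra_def vecs_def by auto
qed

lemma right_coideal_Int:
  assumes "is_coalgebra \<delta> \<epsilon>" and A: "right_coideal \<delta> A" and B: "right_coideal \<delta> B"
  shows "right_coideal \<delta> (A \<inter> B)"
proof -
  have sA: "is_subspace A" and sB: "is_subspace B" using A B by (auto simp: right_coideal_def)
  then have "is_subspace (A \<inter> B)" unfolding is_subspace_def by auto
  moreover have "comult \<delta> m \<in> lspan {tens u v | u v. u \<in> A \<inter> B \<and> v \<in> vecs}" if "m \<in> A \<inter> B" for m
  proof (rule mem_tensor_span_if_columns_in)
    show "finite (fsupp (comult \<delta> m))"
      using finite_fsupp_comult[OF assms(1)] that sA by (auto simp: is_subspace_def)
    show "(\<lambda>i. comult \<delta> m (i, j)) \<in> A \<inter> B" for j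
      using column_in_subspace_if_mem_tensor_span[OF sA] column_in_subspace_if_mem_tensor_span[OF sB]
        that A B unfolding right_coideal_def by blast
  qed
  ultimately show ?thesis unfolding right_coideal_def by blast
qed

lemma (in vector_space) subspace_superset_subset_if_dim_le:
  assumes "subspace N" and "N \<subseteq> N'" and "N' \<subseteq> span S" and "finite S"
    and "dim N' \<le> dim N"
  shows "N' \<subseteq> N"
proof -
  obtain A where A: "A \<subseteq> N" "independent A" "N \<subseteq> span A"
    using maximal_independent_subset by blast
  obtain A' where A': "A \<subseteq> A'" "A' \<subseteq> N'" "independent A'" "N' \<subseteq> span A'"
    using maximal_independent_subset_extend[of A N'] A assms(2) by blast
  have "finite A'" using independent_span_bound[OF assms(4) A'(3)] A'(2) assms(3) by blast
  moreover have "card A' \<le> card A"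
    using basis_card_eq_dim A A' assms(5) by metis
  ultimately have "A' = A" using card_seteq[OF _ A'(1)] by (simp add: eq_commute)
  then have "N' \<subseteq> span A" using A' by simp
  also have "\<dots> \<subseteq> N" using span_minimal[OF A(1) assms(1)] .
  finally show ?thesis .
qed

text \<open>A proper subcomodule of largest dimension above K is maximal.\<close>

lemma proper_subcomodule_le_maximal:
  assumes fin: "fin_dim M" and K: "right_coideal \<delta> K" "K \<subset> M"
  obtains N where "maximal_subcomodule \<delta> M N" and "K \<subseteq> N"
proof -
  obtain S where "finite S" and M_span: "M \<subseteq> fv.span S"
    using fin by (auto simp: fin_dim_def lspan_eq_span)
  define P where "P N \<longleftrightarrow> right_coideal \<delta> N \<and> K \<subseteq> N \<and> N \<subset> M" for N
  define D where "D = fv.dim ` Collect P"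
  have "D \<subseteq> {..card S}"
    using fv.dim_le_card[OF _ \<open>finite S\<close>] M_span by (auto simp: D_def P_def)
  then have "finite D" by (rule finite_subset) simp
  moreover have "fv.dim K \<in> D" using K by (auto simp: D_def P_def)
  ultimately have "Max D \<in> D" using Max_in by blast
  then obtain N where PN: "P N" and dN: "fv.dim N = Max D" by (auto simp: D_def)
  have "maximal_subcomodule \<delta> M N"
    unfolding maximal_subcomodule_def
  proof (intro conjI allI impI)
    show "right_coideal \<delta> N" "N \<subset> M" using PN by (auto simp: P_def)
    fix N' assume N': "right_coideal \<delta> N' \<and> N \<subseteq> N' \<and> N' \<subseteq> M"
    show "N' = N \<or> N' = M"
    proof (cases "N' = M")
      case False
      then have "P N'" using N' PN by (auto simp: P_def)
      then have "fv.dim N' \<le> fv.dim N" using dN \<open>finite D\<close> by (simp add: D_def)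
      moreover have "fv.subspace N"
        using PN is_subspace_imp_subspace by (auto simp: P_def right_coideal_def)
      ultimately have "N' \<subseteq> N"
        using fv.subspace_superset_subset_if_dim_le[OF _ _ _ \<open>finite S\<close>] N' M_span by blast
      then show ?thesis using N' by blast
    qed simp
  qed
  then show ?thesis using PN that by (auto simp: P_def)
qed

lemma maximal_subcomodule_jac:
  assumes "local_comodule \<delta> M"
  shows "maximal_subcomodule \<delta> M (jac \<delta> M)"
proof -
  obtain N where N: "maximal_subcomodule \<delta> M N"
    and unique: "\<And>N'. maximal_subcomodule \<delta> M N' \<Longrightarrow> N' = N"
    using assms unfolding local_comodule_def by blast
  have "jac \<delta> M = N"
    using N unique unfolding jac_def maximal_subcomodule_def by blast
  then show ?thesis using N by simp
qed

lemma proper_subcomodule_le_jac: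
  assumes "fin_dim M" "local_comodule \<delta> M" "right_coideal \<delta> K" "K \<subset> M"
  shows "K \<subseteq> jac \<delta> M"
proof -
  obtain N where "maximal_subcomodule \<delta> M N" "K \<subseteq> N"
    using proper_subcomodule_le_maximal[OF assms(1,3,4)] by blast
  moreover have "N = jac \<delta> M"
    using assms(2) maximal_subcomodule_jac[OF assms(2)] \<open>maximal_subcomodule \<delta> M N\<close>
    unfolding local_comodule_def by blast
  ultimately show ?thesis by simp
qed

lemma generated_subcomodule_eq_if_notin_jac:
  assumes "is_coalgebra \<delta> \<epsilon>" "right_coideal \<delta> M" "fin_dim M" "local_comodule \<delta> M"
    and b: "b \<in> M - jac \<delta> M"
  shows "generated_subcomodule \<delta> b = M"
proof
  show "generated_subcomodule \<delta> b \<subseteq> M"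
    unfolding generated_subcomodule_def using b assms(2) by blast
  show "M \<subseteq> generated_subcomodule \<delta> b"
    unfolding generated_subcomodule_def
  proof (rule Inter_greatest)
    fix N assume "N \<in> {N. right_coideal \<delta> N \<and> b \<in> N}"
    then have N: "right_coideal \<delta> N" "b \<in> N" by auto
    have "right_coideal \<delta> (N \<inter> M)" using right_coideal_Int[OF assms(1) N(1) assms(2)] .
    then have "\<not> N \<inter> M \<subset> M"
      using proper_subcomodule_le_jac[OF assms(3,4)] b N(2) by blast
    then show "M \<subseteq> N" by blast
  qed
qed

theorem mainTheorem3:
  fixes \<delta> :: "'i \<Rightarrow> ('i \<times> 'i \<Rightarrow> 'k::field)"
    and \<epsilon> :: "'i \<Rightarrow> 'k"
    and B M :: "('i \<Rightarrow> 'k) set"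
  assumes "is_coalgebra \<delta> \<epsilon>"
    and "coradical_basis \<delta> B"
    and "right_coideal \<delta> M"
    and "fin_dim M"
    and "local_comodule \<delta> M"
    and "B_supported B M"
  shows "(B \<inter> M) - jac \<delta> M \<noteq> {} \<and>
         (\<forall>b \<in> (B \<inter> M) - jac \<delta> M. generated_subcomodule \<delta> b = M)"
proof
  have jac: "maximal_subcomodule \<delta> M (jac \<delta> M)"
    using maximal_subcomodule_jac[OF assms(5)] .
  show "(B \<inter> M) - jac \<delta> M \<noteq> {}"
  proof
    assume "(B \<inter> M) - jac \<delta> M = {}"
    then have "lspan (B \<inter> M) \<subseteq> jac \<delta> M"
      using jac by (intro lspan_subset_subspace) (auto simp: maximal_subcomodule_def right_coideal_def)
    moreover have "lspan (B \<inter> M) = M"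
      using assms(6) by (simp add: B_supported_def is_basis_of_def)
    ultimately show False using jac by (auto simp: maximal_subcomodule_def)
  qed
  show "\<forall>b \<in> (B \<inter> M) - jac \<delta> M. generated_subcomodule \<delta> b = M"
    using generated_subcomodule_eq_if_notin_jac[OF assms(1,3,4,5)] by blast
qed

end
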